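(* Let $n\ge2$, $L\ge0$, $k\in\{0,\dots,n-1\}$, and let $p=(\lambda_0,\dots,\lambda_L)$ be a path with $\lambda_0=2\Lambda_0$ and $\lambda_L=\Lambda_k+\Lambda_{L-k}$. Let $x_1<\dots<x_N$ be the positions and $h_1,\dots,h_N$ the heights of the domain walls of $p$, and put $W=x_N$ (the number of nodes in the first row of the associated K-graph) and $h_N$ the height of the last domain wall, with the convention $W=0$, $h_N=h_0=n$ if $N=0$. Then $W-h_N\equiv 2k \pmod n$.
   Context: $\Lambda_0,\dots,\Lambda_{n-1}$ are the fundamental weights of the affine algebra $\widehat{sl(n)}$; indices are extended to all integers modulo $n$ ($\Lambda_i=\Lambda_{i'}$ when $i\equiv i'\pmod n$). For $i\in\mathbb{Z}$ set $\hat{i}=\Lambda_{i+1}-\Lambda_i$ (depending only on $i \bmod n$; the weights $\hat0,\dots,\widehat{n-1}$ are distinct). $P_2^+=\{\Lambda_a+\Lambda_b: 0\le a\le b\le n-1\}$. A path is a sequence $(\lambda_0,\dots,\lambda_L)$ of elements of $P_2^+$ with $\lambda_{\ell+1}-\lambda_\ell\in\{\hat0,\dots,\widehat{n-1}\}$. For a path with $\lambda_0=2\Lambda_0$, $\lambda_L=\Lambda_k+\Lambda_{L-k}$, set $\lambda_{L+1}=\Lambda_k+\Lambda_{L-k+1}$ and define $\mu_\ell\in\{0,\dots,n-1\}$ ($0\le\ell\le L$) by $\widehat{\mu_\ell}=\lambda_{\ell+1}-\lambda_\ell$. There is a domain wall at position $\ell\in\{1,\dots,L\}$ of height $h\in\{1,\dots,n-1\}$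 if $\mu_\ell-\mu_{\ell-1}\equiv h+1\pmod n$. *)

theory Defs
  imports "HOL-Number_Theory.Cong" "HOL-Library.Function_Algebras"
begin

text \<open>Weights of level-type combinations of the fundamental weights
  \<Lambda>_0,...,\<Lambda>_{n-1} are represented by their coefficient vectors
  (coefficient of \<Lambda>_j at position j, for j < n).\<close>
type_synonym weight = "nat \<Rightarrow> int"

definition Lam :: "nat \<Rightarrow> int \<Rightarrow> weight" where
  "Lam n i = (\<lambda>j. if int j = i mod int n then 1 else 0)"

definition hat :: "nat \<Rightarrow> int \<Rightarrow> weight" where
  "hat n i = Lam n (i + 1) - Lam n i"

definition P2plus :: "nat \<Rightarrow> weight set" where
  "P2plus n = {Lam n (int a) + Lam n (int b) | a b. a \<le> b \<and> b \<le> n - 1}"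

definition is_path :: "nat \<Rightarrow> nat \<Rightarrow> (nat \<Rightarrow> weight) \<Rightarrow> bool" where
  "is_path n L lam \<longleftrightarrow>
     (\<forall>l\<le>L. lam l \<in> P2plus n) \<and>
     (\<forall>l<L. \<exists>i<n. lam (Suc l) - lam l = hat n (int i))"

definition lamext :: "nat \<Rightarrow> nat \<Rightarrow> nat \<Rightarrow> (nat \<Rightarrow> weight) \<Rightarrow> nat \<Rightarrow> weight" where
  "lamext n L k lam l =
     (if l \<le> L then lam l else Lam n (int k) + Lam n (int L - int k + 1))"

definition mu :: "nat \<Rightarrow> nat \<Rightarrow> nat \<Rightarrow> (nat \<Rightarrow> weight) \<Rightarrow> nat \<Rightarrow> nat" where
  "mu n L k lam l =
     (THE m. m < n \<and> hat n (int m) = lamext n L k lam (Suc l) - lamext n L k lam l)"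

definition domain_wall :: "nat \<Rightarrow> nat \<Rightarrow> nat \<Rightarrow> (nat \<Rightarrow> weight) \<Rightarrow> nat \<Rightarrow> nat \<Rightarrow> bool" where
  "domain_wall n L k lam l h \<longleftrightarrow>
     1 \<le> l \<and> l \<le> L \<and> 1 \<le> h \<and> h \<le> n - 1 \<and>
     [int (mu n L k lam l) - int (mu n L k lam (l - 1)) = int h + 1] (mod int n)"

definition wall_positions :: "nat \<Rightarrow> nat \<Rightarrow> nat \<Rightarrow> (nat \<Rightarrow> weight) \<Rightarrow> nat set" where
  "wall_positions n L k lam = {l. \<exists>h. domain_wall n L k lam l h}"

definition W :: "nat \<Rightarrow> nat \<Rightarrow> nat \<Rightarrow> (nat \<Rightarrow> weight) \<Rightarrow> nat" where
  "W n L k lam = (if wall_positions n L k lam = {} then 0 else Max (wall_positions n L k lam))"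

definition hN :: "nat \<Rightarrow> nat \<Rightarrow> nat \<Rightarrow> (nat \<Rightarrow> weight) \<Rightarrow> nat" where
  "hN n L k lam = (if wall_positions n L k lam = {} then n
     else (THE h. domain_wall n L k lam (W n L k lam) h))"

end

theory Submission
  imports Defs
begin

(*
  Past the last domain wall every step increments mu by 1 modulo n, and the prescribed endpoint
  forces mu(L) = L - k; walking backwards, mu(l) = l - k (mod n) and
  lambda(l) = Lambda(k) + Lambda(l - k) for every l >= W.  Without walls this reaches
  lambda(0) = 2 Lambda(0), so k = 0.  Otherwise lambda(W - 1) = Lambda(k) + Lambda(W - k) - hat mu(W - 1)
  lies in P_2^+, so it is nonnegative and mu(W - 1) + 1 is k or W - k modulo n; the latter would make the height of the
  last wall 0, the former gives W - k - h_N = k (mod n).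
*)

lemma not_cong_succ_self:
  fixes i :: int
  assumes "n \<ge> 2"
  shows "\<not> [i + 1 = i] (mod int n)"
proof
  assume "[i + 1 = i] (mod int n)"
  then have "int n dvd 1" by (simp add: cong_iff_dvd_diff)
  with assms show False by simp
qed

lemma Lam_cong: "[i = j] (mod int n) \<Longrightarrow> Lam n i = Lam n j"
  by (simp add: Lam_def cong_def)

lemma Lam_apply_mod: "n > 0 \<Longrightarrow> Lam n j (nat (i mod int n)) = (if [i = j] (mod int n) then 1 else 0)"
  by (simp add: Lam_def cong_def)

lemma hat_cong: "[i = j] (mod int n) \<Longrightarrow> hat n i = hat n j"
  by (simp add: hat_def Lam_cong cong_add)

lemma hat_apply_succ_mod:
  assumes "n \<ge> 2"
  shows "hat n c (nat ((c + 1) mod int n)) = 1"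
  using assms not_cong_succ_self[OF assms, of c] by (simp add: hat_def Lam_apply_mod)

lemma hat_eq_hat_iff:
  assumes "n \<ge> 2"
  shows "hat n i = hat n j \<longleftrightarrow> [i = j] (mod int n)"
proof
  assume "hat n i = hat n j"
  then have "hat n j (nat ((i + 1) mod int n)) = 1"
    using hat_apply_succ_mod[OF assms] by metis
  then have "[i + 1 = j + 1] (mod int n)"
    using assms by (simp add: hat_def Lam_apply_mod split: if_splits)
  then show "[i = j] (mod int n)"
    by (simp add: cong_iff_dvd_diff)
qed (rule hat_cong)

text \<open>Subtracting hat c removes \<Lambda>_(c+1), which must therefore be one of the two summands.\<close>
lemma nonneg_Lam_plus_Lam_minus_hat:
  assumes "n \<ge> 2" and "\<forall>j. 0 \<le> (Lam n a + Lam n b - hat n c) j"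
  shows "[c + 1 = a] (mod int n) \<or> [c + 1 = b] (mod int n)"
proof -
  define j where "j = nat ((c + 1) mod int n)"
  have "0 \<le> Lam n a j + Lam n b j - hat n c j"
    using assms(2) by simp
  then show ?thesis
    using assms(1) hat_apply_succ_mod[OF assms(1), of c]
    by (auto simp: j_def Lam_apply_mod split: if_splits)
qed

lemma P2plus_nonneg: "x \<in> P2plus n \<Longrightarrow> 0 \<le> x j"
  by (auto simp: P2plus_def Lam_def)

lemma domain_wall_height_unique:
  assumes "domain_wall n L k lam l h" and "domain_wall n L k lam l h'"
  shows "h' = h"
proof -
  have "[int h' + 1 = int h + 1] (mod int n)"
    using assms unfolding domain_wall_def by (meson cong_sym cong_trans)
  then have "[h' = h] (mod n)"
    by (simp add: cong_iff_dvd_diff flip: cong_int_iff)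
  moreover have "h < n" "h' < n"
    using assms by (auto simp: domain_wall_def)
  ultimately show ?thesis
    by (simp add: cong_less_modulus_unique_nat)
qed

locale path_to_endpoint =
  fixes n L k :: nat and lam :: "nat \<Rightarrow> weight"
  assumes n_ge_2: "n \<ge> 2"
    and path: "is_path n L lam"
    and lam_L: "lam L = Lam n (int k) + Lam n (int L - int k)"
begin

abbreviation lam' :: "nat \<Rightarrow> weight" where
  "lam' \<equiv> lamext n L k lam"

abbreviation \<mu> :: "nat \<Rightarrow> int" where
  "\<mu> l \<equiv> int (mu n L k lam l)"

abbreviation walls :: "nat set" where
  "walls \<equiv> wall_positions n L k lam"

abbreviation last_wall :: nat where
  "last_wall \<equiv> W n L k lam"

lemma lamext_Suc_L: "lam' (Suc L) - lam' L = hat n (int L - int k)"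
  using lam_L by (simp add: lamext_def hat_def algebra_simps)

lemma lamext_step:
  assumes "l \<le> L"
  shows "\<exists>i<n. lam' (Suc l) - lam' l = hat n (int i)"
proof (cases "l < L")
  case True
  then show ?thesis
    using path by (auto simp: is_path_def lamext_def)
next
  case False
  define i where "i = nat ((int L - int k) mod int n)"
  have "i < n"
    using n_ge_2 by (simp add: i_def nat_less_iff)
  moreover have "hat n (int L - int k) = hat n (int i)"
    using n_ge_2 by (intro hat_cong) (simp add: i_def cong_def)
  ultimately show ?thesis
    using False assms lamext_Suc_L by (metis le_antisym not_less)
qed

lemma hat_mu:
  assumes "l \<le> L"
  shows "hat n (\<mu> l) = lam' (Suc l) - lam' l"
proof -
  obtain i where i: "i < n" "lam' (Suc l) - lam' l = hat n (int i)"
    using lamext_step[OF assms] by blast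
  have "mu n L k lam l = i"
    unfolding mu_def
  proof (rule the_equality)
    fix m
    assume m: "m < n \<and> hat n (int m) = lam' (Suc l) - lam' l"
    then have "[m = i] (mod n)"
      using i hat_eq_hat_iff[OF n_ge_2] by (simp flip: cong_int_iff)
    then show "m = i"
      using m i(1) by (simp add: cong_less_modulus_unique_nat)
  qed (use i in simp)
  then show ?thesis
    using i by simp
qed

lemma mu_L_cong: "[\<mu> L = int L - int k] (mod int n)"
  using hat_mu[of L] lamext_Suc_L hat_eq_hat_iff[OF n_ge_2] by simp

lemma lamext_nonneg: "l \<le> L \<Longrightarrow> 0 \<le> lam' l j"
  using path by (auto simp: lamext_def is_path_def intro: P2plus_nonneg)

lemma finite_walls: "finite walls"
proof (rule finite_subset)
  show "walls \<subseteq> {1..L}"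
    by (auto simp: wall_positions_def domain_wall_def)
qed simp

lemma last_wall_in_walls: "walls \<noteq> {} \<Longrightarrow> last_wall \<in> walls"
  using finite_walls by (simp add: W_def)

lemma not_in_walls_after_last_wall: "last_wall < l \<Longrightarrow> l \<notin> walls"
  using finite_walls by (auto simp: W_def split: if_splits)

text \<open>A step that is not a wall has difference exactly 1, since every other residue of the
  difference is h + 1 for some admissible height h.\<close>
lemma mu_step_cong_if_not_wall:
  assumes "1 \<le> l" "l \<le> L" "l \<notin> walls"
  shows "[\<mu> l - \<mu> (l - 1) = 1] (mod int n)"
proof (rule ccontr)
  assume not_one: "\<not> ?thesis"
  define d where "d = (\<mu> l - \<mu> (l - 1) - 1) mod int n"
  have "d \<noteq> 0"
    using not_one by (simp add: d_def cong_iff_dvd_diff dvd_eq_mod_eq_0)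
  moreover have "0 \<le> d" "d < int n"
    using n_ge_2 by (auto simp: d_def)
  moreover have "[\<mu> l - \<mu> (l - 1) - 1 + 1 = d + 1] (mod int n)"
    by (intro cong_add) (simp_all add: d_def cong_def)
  ultimately have "domain_wall n L k lam l (nat d)"
    using assms(1,2) by (simp add: domain_wall_def nat_le_iff le_diff_conv2)
  with assms(3) show False
    by (auto simp: wall_positions_def)
qed

lemma mu_cong_from_last_wall:
  assumes "last_wall \<le> l" "l \<le> L"
  shows "[\<mu> l = int l - int k] (mod int n)"
  using assms(2,1)
proof (induction l rule: inc_induct)
  case base
  show ?case by (rule mu_L_cong)
next
  case (step l)
  have "[\<mu> (Suc l) - (\<mu> (Suc l) - \<mu> l) = (int (Suc l) - int k) - 1] (mod int n)"
    using step not_in_walls_after_last_wall mu_step_cong_if_not_wall[of "Suc l"]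
    by (intro cong_diff) auto
  then show ?case
    by (simp add: algebra_simps)
qed

lemma lamext_from_last_wall:
  assumes "last_wall \<le> l" "l \<le> Suc L"
  shows "lam' l = Lam n (int k) + Lam n (int l - int k)"
  using assms(2,1)
proof (induction l rule: inc_induct)
  case base
  show ?case by (simp add: lamext_def algebra_simps)
next
  case (step l)
  have "l \<le> L"
    using step.hyps by simp
  then have mu_l: "hat n (\<mu> l) = hat n (int l - int k)"
    using step.prems by (intro hat_cong mu_cong_from_last_wall)
  have "lam' l = lam' (Suc l) - hat n (\<mu> l)"
    using hat_mu[OF \<open>l \<le> L\<close>] by simp
  also have "\<dots> = Lam n (int k) + Lam n (int (Suc l) - int k) - hat n (int l - int k)"
    by (simp only: step.IH[OF le_SucI[OF step.prems]] mu_l)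
  also have "\<dots> = Lam n (int k) + Lam n (int l - int k)"
    by (simp add: hat_def algebra_simps)
  finally show ?case .
qed

lemma k_eq_0_if_no_walls:
  assumes "walls = {}" and "k < n" and "lam 0 = Lam n 0 + Lam n 0"
  shows "k = 0"
proof -
  have "last_wall = 0"
    using assms(1) by (simp add: W_def)
  then have "Lam n 0 + Lam n 0 = Lam n (int k) + Lam n (- int k)"
    using lamext_from_last_wall[of 0] assms(3) by (simp add: lamext_def)
  then have "(Lam n 0 + Lam n 0) 0 = (Lam n (int k) + Lam n (- int k)) 0"
    by simp
  then have "int k mod int n = 0"
    by (simp add: Lam_def split: if_splits)
  with assms(2) show ?thesis
    by simp
qed

lemma hN_eq_height:
  assumes "domain_wall n L k lam last_wall h"
  shows "hN n L k lam = h"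
proof -
  have "walls \<noteq> {}"
    using assms by (auto simp: wall_positions_def)
  then show ?thesis
    using assms domain_wall_height_unique by (auto simp: hN_def)
qed

lemma last_wall_cong:
  assumes wall: "domain_wall n L k lam last_wall h"
  shows "[int last_wall - int h = 2 * int k] (mod int n)"
proof -
  define w where "w = last_wall"
  define a b where "a = \<mu> (w - 1)" and "b = \<mu> w"
  have w: "1 \<le> w" "w \<le> L" "1 \<le> h" "h < n"
    using wall n_ge_2 by (auto simp: w_def domain_wall_def)
  have jump: "int n dvd (b - a) - (int h + 1)"
    using wall by (simp add: w_def a_def b_def domain_wall_def cong_iff_dvd_diff)
  have b_cong: "int n dvd b - (int w - int k)"
    using w by (simp add: w_def b_def mu_cong_from_last_wall flip: cong_iff_dvd_diff)
  have "lam' (w - 1) = lam' w - hat n a"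
    using hat_mu[of "w - 1"] w by (simp add: a_def)
  also have "\<dots> = Lam n (int k) + Lam n (int w - int k) - hat n a"
    using w by (simp add: w_def lamext_from_last_wall)
  finally have "\<forall>j. 0 \<le> (Lam n (int k) + Lam n (int w - int k) - hat n a) j"
    using lamext_nonneg[of "w - 1"] w(2) by simp
  then consider "int n dvd (a + 1) - int k" | "int n dvd (a + 1) - (int w - int k)"
    using nonneg_Lam_plus_Lam_minus_hat[OF n_ge_2] by (auto simp: cong_iff_dvd_diff)
  then show ?thesis
  proof cases
    case 1
    have "int n dvd (b - (int w - int k)) - ((b - a) - (int h + 1)) - ((a + 1) - int k)"
      using dvd_diff[OF dvd_diff[OF b_cong jump] 1] .
    then show ?thesis
      by (simp add: w_def cong_iff_dvd_diff algebra_simps dvd_diff_commute[of _ "int last_wall"])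
  next
    case 2
    have "int n dvd ((a + 1) - (int w - int k)) - (b - (int w - int k)) + ((b - a) - (int h + 1))"
      using dvd_add[OF dvd_diff[OF 2 b_cong] jump] .
    then have "n dvd h"
      by (simp add: algebra_simps)
    with w show ?thesis
      using dvd_imp_le by fastforce
  qed
qed

end

theorem lemma3:
  fixes n L k :: nat and lam :: "nat \<Rightarrow> weight"
  assumes "n \<ge> 2" and "k < n"
    and "is_path n L lam"
    and "lam 0 = Lam n 0 + Lam n 0"
    and "lam L = Lam n (int k) + Lam n (int L - int k)"
  shows "[int (W n L k lam) - int (hN n L k lam) = 2 * int k] (mod int n)"
proof -
  interpret path_to_endpoint n L k lam
    using assms(1,3,5) by unfold_locales
  show ?thesis
  proof (cases "wall_positions n L k lam = {}")
    case True
    then have "k = 0" "W n L k lam = 0" "hN n L k lam = n"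
      using k_eq_0_if_no_walls assms(2,4) by (simp_all add: W_def hN_def)
    then show ?thesis
      by (simp add: cong_iff_dvd_diff)
  next
    case False
    then obtain h where "domain_wall n L k lam (W n L k lam) h"
      using last_wall_in_walls by (auto simp: wall_positions_def)
    then show ?thesis
      using last_wall_cong hN_eq_height by simp
  qed
qed

end
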